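(* Fast-track actions are optimal: let $s_t$ be a state in which the current color $p_t\neq 0$, the next upstream car has color $e_{t,1}=p_t$, and some lane $i$ is completely empty. Then the store action that places this car into lane $i$ (action $a=L+i$) is optimal in $s_t$.
   Context: Paint shop problem with a multi-lane buffer: an upstream sequence of cars with colors in $\{1,\dots,C\}$ is processed in order; the buffer has $L$ lanes, each a first-in-first-out queue of capacity $W$, with $B_{t,i,j}\in\{0,\dots,C\}$ the color at position $j$ of lane $i$ at time $t$ (0 = empty, position $W$ is the front/exit of the lane, new cars enter at the rightmost empty position). $e_{t,1}$ is the color of the next upstream car (0 if the upstream sequence is empty), and $p_t\in\{0,\dots,C\}$ is the color of the last car appended to the downstream sequence (0 initially). Actions: $a\in\{1,\dots,L\}$ retrieves the front car of lane $a$ and appends it to the downstream sequence (setting $p_{t+1}=B_{t,a,W}$); $a\in\{L+1,\dots,2L\}$ stores the next upstream car in lane $a-L$ (leaving $p$ unchanged). Reward: $r(s_t,a)=1$ for a valid retrieval with $B_{t,a,W}=p_t$; $0$ for a valid retrieval with $B_{t,a,W}\neq p_t$; $0$ for a valid store; $-10$ for an invalid action (retrieving from an empty lane, storing into a full lane, or storing when the upstream sequence is empty). The cumulative reward of actions $a_1,\dots,a_n$ from state $s_0$ is $r(s_0,a_1,\dots,a_n)=\sum_{t=0}^{n-1} r(s_t,a_{t+1})$, where $s_{t+1}$ results from applying $a_{t+1}$ in $s_t$. An action $a^*$ is optimal in $s_t$ if $\max_{a_1,\dots,a_n}r(s_t,a^*,a_1,\dots,a_n)\ge r(s_t,a',a'_1,\dots,a'_n)$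 for all actions $a',a'_1,\dots,a'_n$. *)

theory Defs
  imports Main
begin

text \<open>Lane i is stored as a list whose head is the front car (position W); the color
  B_{t,i,j} at position j of lane i is given by function buf below (0 = empty).\<close>

record pstate =
  lanes :: "nat \<Rightarrow> nat list"   \<comment> \<open>lane i (1..L); head = front car at position W\<close>
  upstream :: "nat list"
  prev :: "nat"                  \<comment> \<open>p_t: color of last car appended downstream (0 initially)\<close>

text \<open>B_{t,i,j}: position W is the front, cars are packed towards the front.\<close>
definition buf :: "nat \<Rightarrow> pstate \<Rightarrow> nat \<Rightarrow> nat \<Rightarrow> nat" where
  "buf W s i j = (if 1 \<le> j \<and> j \<le> W \<and> W - j < length (lanes s i)
                   then lanes s i ! (W - j) else 0)"

definition next_up :: "pstate \<Rightarrow> nat" where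
  "next_up s = (case upstream s of [] \<Rightarrow> 0 | c # _ \<Rightarrow> c)"

definition wf_state :: "nat \<Rightarrow> nat \<Rightarrow> nat \<Rightarrow> pstate \<Rightarrow> bool" where
  "wf_state L W C s \<longleftrightarrow> 1 \<le> L \<and> 1 \<le> W \<and> 1 \<le> C \<and>
     (\<forall>i\<in>{1..L}. length (lanes s i) \<le> W \<and> set (lanes s i) \<subseteq> {1..C}) \<and>
     set (upstream s) \<subseteq> {1..C} \<and> prev s \<le> C"

definition step :: "nat \<Rightarrow> nat \<Rightarrow> pstate \<Rightarrow> nat \<Rightarrow> int \<times> pstate" where
  "step L W s a =
    (if 1 \<le> a \<and> a \<le> L then
       (case lanes s a of
          [] \<Rightarrow> (-10, s)
        | c # rest \<Rightarrow> ((if c = prev s then 1 else 0),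
                       s\<lparr>lanes := (lanes s)(a := rest), prev := c\<rparr>))
     else if L < a \<and> a \<le> 2 * L then
       (let i = a - L in
        case upstream s of
          [] \<Rightarrow> (-10, s)
        | c # rest \<Rightarrow> (if W \<le> length (lanes s i) then (-10, s)
                       else (0, s\<lparr>lanes := (lanes s)(i := lanes s i @ [c]), upstream := rest\<rparr>)))
     else (-10, s))"

fun cum_reward :: "nat \<Rightarrow> nat \<Rightarrow> pstate \<Rightarrow> nat list \<Rightarrow> int" where
  "cum_reward L W s [] = 0"
| "cum_reward L W s (a # as) =
     fst (step L W s a) + cum_reward L W (snd (step L W s a)) as"

text \<open>a is optimal in s: for every action a' and continuation a'_1..a'_n, some
  continuation after a achieves at least the same cumulative reward
  (i.e. the max over continuations after a dominates).\<close>
definition optimal_action :: "nat \<Rightarrow> nat \<Rightarrow> pstate \<Rightarrow> nat \<Rightarrow> bool" where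
  "optimal_action L W s a \<longleftrightarrow>
     (\<forall>a' as'. a' \<in> {1..2*L} \<and> set as' \<subseteq> {1..2*L} \<longrightarrow>
        (\<exists>as. set as \<subseteq> {1..2*L} \<and>
              cum_reward L W s (a' # as') \<le> cum_reward L W s (a # as)))"

end

theory Submission
  imports Defs
begin

text \<open>Storing the car c = p_t in the empty lane and retrieving it at once earns 1 and leads to
  the state u that is s without c.  Any schedule from s can be replayed from u, skipping the moves
  that concern c, at a total loss of at most 1: until c is retrieved both runs see the same cars
  and the same last color.  Retrieving c earns 1 exactly when c equals the last color, and then
  the runs agree afterwards; otherwise they differ only in the last color, which costs at most
  one point later.\<close>

lemma action_cases:
  obtains (retrieve) c rest where "1 \<le> a" "a \<le> L" "lanes s a = c # rest"
  | (store) c rest where "L < a" "a \<le> 2 * L" "upstream s = c # rest" "length (lanes s (a - L)) < W"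
  | (invalid) "\<not> (1 \<le> a \<and> a \<le> L \<and> lanes s a \<noteq> [])"
      "\<not> (L < a \<and> a \<le> 2 * L \<and> upstream s \<noteq> [] \<and> length (lanes s (a - L)) < W)"
  by (metis neq_Nil_conv)

lemma step_retrieve:
  "1 \<le> a \<Longrightarrow> a \<le> L \<Longrightarrow> lanes s a = c # rest \<Longrightarrow>
   step L W s a = (if c = prev s then 1 else 0, s\<lparr>lanes := (lanes s)(a := rest), prev := c\<rparr>)"
  unfolding step_def by auto

lemma step_store:
  "L < a \<Longrightarrow> a \<le> 2 * L \<Longrightarrow> upstream s = c # rest \<Longrightarrow> length (lanes s (a - L)) < W \<Longrightarrow>
   step L W s a = (0, s\<lparr>lanes := (lanes s)(a - L := lanes s (a - L) @ [c]), upstream := rest\<rparr>)"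
  unfolding step_def Let_def by auto

lemma step_invalid:
  "\<not> (1 \<le> a \<and> a \<le> L \<and> lanes s a \<noteq> []) \<Longrightarrow>
   \<not> (L < a \<and> a \<le> 2 * L \<and> upstream s \<noteq> [] \<and> length (lanes s (a - L)) < W) \<Longrightarrow>
   step L W s a = (-10, s)"
  unfolding step_def Let_def by (auto split: list.split)

lemma cum_reward_le_if_same_buffer:
  assumes "lanes t = lanes u" "upstream t = upstream u"
  shows "cum_reward L W t \<sigma> \<le> (if prev t = prev u then 0 else 1) + cum_reward L W u \<sigma>"
  using assms
proof (induction \<sigma> arbitrary: t u)
  case Nil
  then show ?case by simp
next
  case (Cons a \<sigma>)
  show ?case
  proof (cases rule: action_cases[where a=a and L=L and s=t and W=W])
    case (retrieve c rest)
    define t' where "t' = t\<lparr>lanes := (lanes t)(a := rest), prev := c\<rparr>"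
    define u' where "u' = u\<lparr>lanes := (lanes u)(a := rest), prev := c\<rparr>"
    have "cum_reward L W t' \<sigma> \<le> cum_reward L W u' \<sigma>"
      using Cons.IH[of t' u'] Cons.prems by (simp add: t'_def u'_def)
    moreover have "step L W t a = (if c = prev t then 1 else 0, t')"
      and "step L W u a = (if c = prev u then 1 else 0, u')"
      using retrieve Cons.prems by (simp_all add: step_retrieve t'_def u'_def)
    ultimately show ?thesis by simp
  next
    case (store c rest)
    then show ?thesis
      using Cons.prems Cons.IH[of "t\<lparr>lanes := (lanes t)(a - L := lanes t (a - L) @ [c]), upstream := rest\<rparr>"
          "u\<lparr>lanes := (lanes u)(a - L := lanes u (a - L) @ [c]), upstream := rest\<rparr>"]
      by (simp add: step_store)
  next
    case invalid
    then show ?thesis using Cons by (simp add: step_invalid)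
  qed
qed

definition extra_lane_car :: "nat \<Rightarrow> pstate \<Rightarrow> pstate \<Rightarrow> bool" where
  "extra_lane_car c t u \<longleftrightarrow> (\<exists>k xs ys. lanes u k = xs @ ys \<and> lanes t = (lanes u)(k := xs @ c # ys)
      \<and> upstream t = upstream u \<and> prev t = prev u)"

lemma extra_lane_car_cum_reward_le:
  assumes "extra_lane_car c t u"
  shows "\<exists>\<tau>. set \<tau> \<subseteq> set \<sigma> \<and> cum_reward L W t \<sigma> \<le> 1 + cum_reward L W u \<tau>"
  using assms
proof (induction \<sigma> arbitrary: t u)
  case Nil
  then show ?case by auto
next
  case (Cons a \<sigma>)
  obtain k xs ys where u_k: "lanes u k = xs @ ys" and t_lanes: "lanes t = (lanes u)(k := xs @ c # ys)"
    and t_up: "upstream t = upstream u" and t_prev: "prev t = prev u"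
    using Cons.prems unfolding extra_lane_car_def by blast
  have follow: "\<exists>\<tau>. set \<tau> \<subseteq> set (a # \<sigma>) \<and> cum_reward L W t (a # \<sigma>) \<le> 1 + cum_reward L W u \<tau>"
    if step_t: "step L W t a = (r, t')" and step_u: "step L W u a = (r, u')"
      and rel: "extra_lane_car c t' u'" for r t' u'
  proof -
    obtain \<tau> where "set \<tau> \<subseteq> set \<sigma>" "cum_reward L W t' \<sigma> \<le> 1 + cum_reward L W u' \<tau>"
      using Cons.IH rel by blast
    with step_t step_u show ?thesis by (intro exI[of _ "a # \<tau>"]) auto
  qed
  show ?case
  proof (cases rule: action_cases[where a=a and L=L and s=t and W=W])
    case (retrieve d rest)
    define t' where "t' = t\<lparr>lanes := (lanes t)(a := rest), prev := d\<rparr>"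
    have step_t: "step L W t a = (if d = prev u then 1 else 0, t')"
      using retrieve t_prev by (simp add: step_retrieve t'_def)
    show ?thesis
    proof (cases "a = k")
      case False
      with retrieve t_lanes have "lanes u a = d # rest" by simp
      then have "step L W u a = (if d = prev u then 1 else 0, u\<lparr>lanes := (lanes u)(a := rest), prev := d\<rparr>)"
        using retrieve by (simp add: step_retrieve)
      moreover have "extra_lane_car c t' (u\<lparr>lanes := (lanes u)(a := rest), prev := d\<rparr>)"
        unfolding extra_lane_car_def t'_def
        using False u_k t_lanes t_up t_prev
        by (intro exI[of _ k] exI[of _ xs] exI[of _ ys]) (auto intro!: ext)
      ultimately show ?thesis by (rule follow[OF step_t])
    next
      case True
      show ?thesis
      proof (cases xs)
        case Nil
        \<comment> \<open>t retrieves c itself and then has the buffer of u\<close>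
        with retrieve True t_lanes have "d = c" "rest = ys" by auto
        with Nil True u_k t_lanes t_up
        have "lanes t' = lanes u" "upstream t' = upstream u" "prev t' = c"
          by (auto simp: t'_def)
        then have "cum_reward L W t' \<sigma> \<le> (if c = prev u then 0 else 1) + cum_reward L W u \<sigma>"
          using cum_reward_le_if_same_buffer[of t' u] by simp
        with step_t \<open>d = c\<close> show ?thesis by (intro exI[of _ \<sigma>]) auto
      next
        case (Cons x xs')
        with retrieve True t_lanes have "d = x" "rest = xs' @ c # ys" by auto
        with True Cons u_k have "step L W u a =
            (if d = prev u then 1 else 0, u\<lparr>lanes := (lanes u)(k := xs' @ ys), prev := d\<rparr>)"
          using retrieve by (simp add: step_retrieve)
        moreover have "extra_lane_car c t' (u\<lparr>lanes := (lanes u)(k := xs' @ ys), prev := d\<rparr>)"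
          unfolding extra_lane_car_def t'_def
          using True \<open>rest = xs' @ c # ys\<close> t_lanes t_up by auto
        ultimately show ?thesis by (rule follow[OF step_t])
      qed
    qed
  next
    case (store d rest)
    define i where "i = a - L"
    define ys' where "ys' = (if i = k then ys @ [d] else ys)"
    have "length (lanes u i) < W"
      using store(4) t_lanes u_k by (cases "i = k") (auto simp: i_def)
    have "step L W t a = (0, t\<lparr>lanes := (lanes t)(i := lanes t i @ [d]), upstream := rest\<rparr>)"
      using store by (simp add: step_store i_def)
    moreover have "step L W u a = (0, u\<lparr>lanes := (lanes u)(i := lanes u i @ [d]), upstream := rest\<rparr>)"
      using store t_up \<open>length (lanes u i) < W\<close> by (simp add: step_store i_def)
    moreover have "extra_lane_car c (t\<lparr>lanes := (lanes t)(i := lanes t i @ [d]), upstream := rest\<rparr>)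
        (u\<lparr>lanes := (lanes u)(i := lanes u i @ [d]), upstream := rest\<rparr>)"
      unfolding extra_lane_car_def
      using u_k t_lanes t_prev
      by (intro exI[of _ k] exI[of _ xs] exI[of _ ys']) (auto simp: ys'_def intro!: ext)
    ultimately show ?thesis by (rule follow)
  next
    case invalid
    then obtain \<tau> where "set \<tau> \<subseteq> set \<sigma>" "cum_reward L W t \<sigma> \<le> 1 + cum_reward L W u \<tau>"
      using Cons.IH Cons.prems by blast
    with invalid show ?thesis by (intro exI[of _ \<tau>]) (auto simp: step_invalid)
  qed
qed

definition extra_upstream_car :: "nat \<Rightarrow> pstate \<Rightarrow> pstate \<Rightarrow> bool" where
  "extra_upstream_car c t u \<longleftrightarrow>
     lanes t = lanes u \<and> upstream t = c # upstream u \<and> prev t = prev u"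

lemma extra_upstream_car_cum_reward_le:
  assumes "extra_upstream_car c t u"
  shows "\<exists>\<tau>. set \<tau> \<subseteq> set \<sigma> \<and> cum_reward L W t \<sigma> \<le> 1 + cum_reward L W u \<tau>"
  using assms
proof (induction \<sigma> arbitrary: t u)
  case Nil
  then show ?case by auto
next
  case (Cons a \<sigma>)
  note rel = Cons.prems[unfolded extra_upstream_car_def]
  show ?case
  proof (cases rule: action_cases[where a=a and L=L and s=t and W=W])
    case (retrieve d rest)
    let ?t' = "t\<lparr>lanes := (lanes t)(a := rest), prev := d\<rparr>"
    let ?u' = "u\<lparr>lanes := (lanes u)(a := rest), prev := d\<rparr>"
    have "extra_upstream_car c ?t' ?u'"
      using rel by (simp add: extra_upstream_car_def)
    then obtain \<tau> where "set \<tau> \<subseteq> set \<sigma>" "cum_reward L W ?t' \<sigma> \<le> 1 + cum_reward L W ?u' \<tau>"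
      using Cons.IH by blast
    with retrieve rel show ?thesis
      by (intro exI[of _ "a # \<tau>"]) (auto simp: step_retrieve)
  next
    case (store d rest)
    let ?t' = "t\<lparr>lanes := (lanes t)(a - L := lanes t (a - L) @ [d]), upstream := rest\<rparr>"
    have "extra_lane_car c ?t' u"
      using store rel unfolding extra_lane_car_def
      by (intro exI[of _ "a - L"] exI[of _ "lanes u (a - L)"] exI[of _ "[]"]) auto
    then obtain \<tau> where "set \<tau> \<subseteq> set \<sigma>" "cum_reward L W ?t' \<sigma> \<le> 1 + cum_reward L W u \<tau>"
      using extra_lane_car_cum_reward_le by blast
    with store show ?thesis by (intro exI[of _ \<tau>]) (auto simp: step_store)
  next
    case invalid
    then obtain \<tau> where "set \<tau> \<subseteq> set \<sigma>" "cum_reward L W t \<sigma> \<le> 1 + cum_reward L W u \<tau>"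
      using Cons.IH Cons.prems by blast
    with invalid show ?thesis by (intro exI[of _ \<tau>]) (auto simp: step_invalid)
  qed
qed

lemma cum_reward_fast_track:
  assumes "i \<in> {1..L}" "1 \<le> W" "lanes s i = []" "upstream s = c # rest"
  shows "cum_reward L W s ((L + i) # i # \<sigma>) =
    (if c = prev s then 1 else 0) + cum_reward L W (s\<lparr>upstream := rest, prev := c\<rparr>) \<sigma>"
  using assms by (simp add: step_store step_retrieve fun_upd_idem)

lemma lane_empty_if_buf_zero:
  assumes "wf_state L W C s" "i \<in> {1..L}" "\<forall>j\<in>{1..W}. buf W s i j = 0"
  shows "lanes s i = []"
proof (rule ccontr)
  assume "lanes s i \<noteq> []"
  moreover have "1 \<le> W" "set (lanes s i) \<subseteq> {1..C}"
    using assms(1,2) by (auto simp: wf_state_def)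
  moreover have "buf W s i W = 0"
    using assms(3) \<open>1 \<le> W\<close> by auto
  ultimately show False
    by (cases "lanes s i") (auto simp: buf_def)
qed

theorem corollary1:
  fixes L W C i :: nat and s :: pstate
  assumes "wf_state L W C s"
    and "prev s \<noteq> 0"
    and "next_up s = prev s"
    and "i \<in> {1..L}"
    and "\<forall>j\<in>{1..W}. buf W s i j = 0"
  shows "optimal_action L W s (L + i)"
  unfolding optimal_action_def
proof (intro allI impI)
  fix a' as' assume actions: "a' \<in> {1..2*L} \<and> set as' \<subseteq> {1..2*L}"
  obtain rest where up: "upstream s = prev s # rest"
    using assms(2,3) unfolding next_up_def by (cases "upstream s") auto
  have "extra_upstream_car (prev s) s (s\<lparr>upstream := rest\<rparr>)"
    using up by (simp add: extra_upstream_car_def)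
  then obtain \<tau> where "set \<tau> \<subseteq> set (a' # as')"
    "cum_reward L W s (a' # as') \<le> 1 + cum_reward L W (s\<lparr>upstream := rest\<rparr>) \<tau>"
    using extra_upstream_car_cum_reward_le by blast
  moreover have "cum_reward L W s ((L + i) # i # \<tau>) = 1 + cum_reward L W (s\<lparr>upstream := rest\<rparr>) \<tau>"
    using cum_reward_fast_track[OF assms(4) _ lane_empty_if_buf_zero[OF assms(1,4,5)] up] assms(1)
    by (simp add: wf_state_def)
  ultimately show "\<exists>as. set as \<subseteq> {1..2*L} \<and> cum_reward L W s (a' # as') \<le> cum_reward L W s ((L + i) # as)"
    using actions assms(4) by (intro exI[of _ "i # \<tau>"]) auto
qed

end
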